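(* Let $a\in\mathbb{R}$, $\sigma>0$, $\gamma>0$, $\lambda>0$, $T\ge1$, channel transition probabilities $p_{cc'}$, and let $V_t$, $t=0,\ldots,T$, be defined on $\mathbb{R}\times\{0,1\}$ by the value iteration in the context. Then for each $c\in\{0,1\}$ and $t\in\{0,1,\ldots,T\}$, $V_t(\Delta,c)$ depends on $\Delta$ only through $|\Delta|$ and is non-decreasing in $|\Delta|$.
   Context: $p_{01},p_{10}\in[0,1]$, $p_{00}=1-p_{01}$, $p_{11}=1-p_{10}$; $\psi(v)=e^{-v^2/(2\sigma^2)}$. Value iteration (for minimizing $\mathbb{E}\exp(\gamma\sum_t(\lambda u(t)+(1-u(t)c(t))\Delta(t)^2))$ for an estimation error $\Delta$ over a two-state Markov channel): $V_0\equiv1$, $Q_{t+1}(\Delta,c;0)=e^{\gamma\Delta^2}\sum_{c_+\in\{0,1\}}p_{cc_+}\int_{\mathbb{R}}\psi(\Delta_+-a\Delta)V_t(\Delta_+,c_+)d\Delta_+$, $Q_{t+1}(\Delta,c;1)=(1-c)e^{\gamma(\lambda+\Delta^2)}\sum_{c_+}p_{cc_+}\int_{\mathbb{R}}\psi(\Delta_+-a\Delta)V_t(\Delta_+,c_+)d\Delta_++c\,e^{\gamma\lambda}\sum_{c_+}p_{cc_+}\int_{\mathbb{R}}\psi(\Delta_+)V_t(\Delta_+,c_+)d\Delta_+$, $V_{t+1}(\Delta,c)=\min_{u\in\{0,1\}}Q_{t+1}(\Delta,c;u)$. *)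

theory Defs
  imports "HOL-Analysis.Analysis"
begin

text \<open>Channel states are encoded as naturals 0 and 1.
  Transition probabilities: p00 = 1 - p01, p11 = 1 - p10.\<close>
definition ptrans :: "real \<Rightarrow> real \<Rightarrow> nat \<Rightarrow> nat \<Rightarrow> real" where
  "ptrans p01 p10 c c' =
     (if c = 0 then (if c' = 0 then 1 - p01 else p01)
      else (if c' = 0 then p10 else 1 - p10))"

definition psi :: "real \<Rightarrow> real \<Rightarrow> real" where
  "psi \<sigma> v = exp (- (v ^ 2) / (2 * \<sigma> ^ 2))"

text \<open>Expected continuation:
  sum over c+ of p(c,c+) * integral over R of psi(D+ - a*D) * V(D+, c+).
  Values are extended nonnegative reals (integrals may diverge).\<close>
definition cont ::
  "real \<Rightarrow> real \<Rightarrow> real \<Rightarrow> real \<Rightarrow> (real \<Rightarrow> nat \<Rightarrow> ennreal) \<Rightarrow> real \<Rightarrow> nat \<Rightarrow> ennreal" where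
  "cont a \<sigma> p01 p10 V D c =
     (\<Sum>c'\<in>{0,1}. ennreal (ptrans p01 p10 c c') *
        (\<integral>\<^sup>+ x. ennreal (psi \<sigma> (x - a * D)) * V x c' \<partial>lborel))"

definition Q0 ::
  "real \<Rightarrow> real \<Rightarrow> real \<Rightarrow> real \<Rightarrow> real \<Rightarrow> (real \<Rightarrow> nat \<Rightarrow> ennreal) \<Rightarrow> real \<Rightarrow> nat \<Rightarrow> ennreal" where
  "Q0 a \<sigma> \<gamma> p01 p10 V D c = ennreal (exp (\<gamma> * D ^ 2)) * cont a \<sigma> p01 p10 V D c"

definition Q1 ::
  "real \<Rightarrow> real \<Rightarrow> real \<Rightarrow> real \<Rightarrow> real \<Rightarrow> real \<Rightarrow> (real \<Rightarrow> nat \<Rightarrow> ennreal) \<Rightarrow> real \<Rightarrow> nat \<Rightarrow> ennreal" where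
  "Q1 a \<sigma> \<gamma> lam p01 p10 V D c =
     ennreal ((1 - real c) * exp (\<gamma> * (lam + D ^ 2))) * cont a \<sigma> p01 p10 V D c
     + ennreal (real c * exp (\<gamma> * lam)) * cont a \<sigma> p01 p10 V 0 c"

fun Vit ::
  "real \<Rightarrow> real \<Rightarrow> real \<Rightarrow> real \<Rightarrow> real \<Rightarrow> real \<Rightarrow> nat \<Rightarrow> real \<Rightarrow> nat \<Rightarrow> ennreal" where
  "Vit a \<sigma> \<gamma> lam p01 p10 0 D c = 1"
| "Vit a \<sigma> \<gamma> lam p01 p10 (Suc t) D c =
     min (Q0 a \<sigma> \<gamma> p01 p10 (Vit a \<sigma> \<gamma> lam p01 p10 t) D c)
         (Q1 a \<sigma> \<gamma> lam p01 p10 (Vit a \<sigma> \<gamma> lam p01 p10 t) D c)"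

end

theory Submission
  imports Defs
begin

text \<open>The Gaussian kernel is even and decreasing in \<open>\<bar>v\<bar>\<close>. Folding the real line at the midpoint
  \<open>k = (m + m')/2\<close> of two centres \<open>0 \<le> m \<le> m'\<close> and applying the two-term rearrangement inequality
  pointwise shows that integrating a function that is even and nondecreasing in \<open>\<bar>x\<bar>\<close> against the
  kernel centred at \<open>m\<close> gives a value that is nondecreasing in \<open>\<bar>m\<bar>\<close>. Since \<open>exp (\<gamma> \<Delta>\<^sup>2)\<close> also has
  this property, and sums, products and minima preserve it, it passes from \<open>V\<^sub>t\<close> to \<open>V\<^sub>t\<^sub>+\<^sub>1\<close>.\<close>

definition radially_mono :: "(real \<Rightarrow> 'a::order) \<Rightarrow> bool" where
  "radially_mono f \<longleftrightarrow> (\<forall>x y. \<bar>x\<bar> \<le> \<bar>y\<bar> \<longrightarrow> f x \<le> f y)"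

lemma radially_monoI: "(\<And>x y. \<bar>x\<bar> \<le> \<bar>y\<bar> \<Longrightarrow> f x \<le> f y) \<Longrightarrow> radially_mono f"
  by (simp add: radially_mono_def)

lemma radially_monoD: "radially_mono f \<Longrightarrow> \<bar>x\<bar> \<le> \<bar>y\<bar> \<Longrightarrow> f x \<le> f y"
  by (simp add: radially_mono_def)

lemma radially_mono_abs_eq: "radially_mono f \<Longrightarrow> \<bar>x\<bar> = \<bar>y\<bar> \<Longrightarrow> f x = f y"
  by (simp add: antisym radially_monoD)

lemma radially_mono_minus: "radially_mono f \<Longrightarrow> f (- x) = f x"
  by (rule radially_mono_abs_eq) simp_all

lemma radially_mono_borel_measurable:
  fixes f :: "real \<Rightarrow> 'a::{linorder_topology, second_countable_topology}"
  assumes f: "radially_mono f"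
  shows "f \<in> borel_measurable borel"
proof (rule borel_measurableI_le)
  fix y
  have "is_interval {x. f x \<le> y}"
    unfolding is_interval_1
  proof clarsimp
    fix a b x assume "f a \<le> y" "f b \<le> y" "a \<le> x" "x \<le> b"
    consider "\<bar>x\<bar> \<le> \<bar>a\<bar>" | "\<bar>x\<bar> \<le> \<bar>b\<bar>"
      using \<open>a \<le> x\<close> \<open>x \<le> b\<close> by arith
    then show "f x \<le> y"
    proof cases
      case 1
      from order_trans[OF radially_monoD[OF f 1] \<open>f a \<le> y\<close>] show ?thesis .
    next
      case 2
      from order_trans[OF radially_monoD[OF f 2] \<open>f b \<le> y\<close>] show ?thesis .
    qed
  qed
  then show "{x \<in> space borel. f x \<le> y} \<in> sets borel"
    by (simp add: real_interval_borel_measurable)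
qed

lemma radially_mono_const: "radially_mono (\<lambda>x. c)"
  by (simp add: radially_mono_def)

lemma radially_mono_scale: "radially_mono f \<Longrightarrow> radially_mono (\<lambda>x. f (c * x))"
  by (simp add: radially_mono_def abs_mult mult_left_mono)

lemma radially_mono_mult:
  fixes f g :: "real \<Rightarrow> 'a::{ordered_semiring, canonically_ordered_monoid_add}"
  shows "radially_mono f \<Longrightarrow> radially_mono g \<Longrightarrow> radially_mono (\<lambda>x. f x * g x)"
  unfolding radially_mono_def by (metis mult_mono zero_le)

lemma radially_mono_sum:
  fixes f :: "'i \<Rightarrow> real \<Rightarrow> 'a::ordered_comm_monoid_add"
  shows "(\<And>i. i \<in> I \<Longrightarrow> radially_mono (f i)) \<Longrightarrow> radially_mono (\<lambda>x. \<Sum>i\<in>I. f i x)"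
  unfolding radially_mono_def by (metis sum_mono)

lemma radially_mono_min:
  fixes f g :: "real \<Rightarrow> 'a::linorder"
  shows "radially_mono f \<Longrightarrow> radially_mono g \<Longrightarrow> radially_mono (\<lambda>x. min (f x) (g x))"
  unfolding radially_mono_def by (metis min.mono)

lemma radially_mono_exp_square:
  assumes "0 \<le> \<gamma>"
  shows "radially_mono (\<lambda>x. ennreal (exp (\<gamma> * (b + x\<^sup>2))))"
  using assms by (intro radially_monoI ennreal_leI)
    (simp add: abs_le_square_iff mult_left_mono)

lemma psi_antimono: "\<bar>u\<bar> \<le> \<bar>v\<bar> \<Longrightarrow> psi \<sigma> v \<le> psi \<sigma> u"
  by (simp add: psi_def abs_le_square_iff divide_right_mono)

lemma psi_borel_measurable [measurable]: "psi \<sigma> \<in> borel_measurable borel"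
  unfolding psi_def by measurable

lemma nn_integral_lborel_reflect:
  fixes f :: "real \<Rightarrow> ennreal"
  assumes "f \<in> borel_measurable borel"
  shows "(\<integral>\<^sup>+x. f (t - x) \<partial>lborel) = (\<integral>\<^sup>+x. f x \<partial>lborel)"
  using nn_integral_real_affine[OF assms, of "-1" t] by simp

lemma nn_integral_lborel_fold:
  fixes f :: "real \<Rightarrow> ennreal"
  assumes [measurable]: "f \<in> borel_measurable borel"
  shows "(\<integral>\<^sup>+x. f x \<partial>lborel) =
    (\<integral>\<^sup>+x. indicator {k..} x * f x + indicator {k<..} x * f (2 * k - x) \<partial>lborel)"
proof -
  have "(\<integral>\<^sup>+x. f x \<partial>lborel) =
      (\<integral>\<^sup>+x. indicator {k..} x * f x + indicator {..<k} x * f x \<partial>lborel)"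
    by (intro nn_integral_cong) (auto simp: indicator_def)
  also have "\<dots> = (\<integral>\<^sup>+x. indicator {k..} x * f x \<partial>lborel) + (\<integral>\<^sup>+x. indicator {..<k} x * f x \<partial>lborel)"
    by (intro nn_integral_add) auto
  also have "(\<integral>\<^sup>+x. indicator {..<k} x * f x \<partial>lborel) =
      (\<integral>\<^sup>+x. indicator {k<..} x * f (2 * k - x) \<partial>lborel)"
    using nn_integral_lborel_reflect[of "\<lambda>x. indicator {..<k} x * f x" "2 * k"]
    by (simp add: indicator_def)
  also have "(\<integral>\<^sup>+x. indicator {k..} x * f x \<partial>lborel) + \<dots> =
      (\<integral>\<^sup>+x. indicator {k..} x * f x + indicator {k<..} x * f (2 * k - x) \<partial>lborel)"
    by (intro nn_integral_add[symmetric]) auto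
  finally show ?thesis .
qed

lemma rearrangement_two:
  fixes a b x y :: "'a::{ordered_semiring, canonically_ordered_monoid_add}"
  assumes "a \<le> b" "x \<le> y"
  shows "a * y + b * x \<le> b * y + a * x"
proof -
  obtain d where b: "b = a + d"
    using \<open>a \<le> b\<close> le_iff_add by blast
  have "d * x \<le> d * y"
    using \<open>x \<le> y\<close> by (simp add: mult_left_mono)
  then have "a * y + a * x + d * x \<le> a * y + a * x + d * y"
    by (rule add_left_mono)
  then show ?thesis
    unfolding b distrib_right by (simp add: ac_simps)
qed

lemma nn_integral_translate_mono:
  fixes f g :: "real \<Rightarrow> ennreal"
  assumes f: "radially_mono f" and [measurable]: "g \<in> borel_measurable borel"
    and g: "\<And>u v. \<bar>u\<bar> \<le> \<bar>v\<bar> \<Longrightarrow> g v \<le> g u"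
    and m: "0 \<le> m" "m \<le> m'"
  shows "(\<integral>\<^sup>+x. g (x - m) * f x \<partial>lborel) \<le> (\<integral>\<^sup>+x. g (x - m') * f x \<partial>lborel)"
proof -
  note [measurable] = radially_mono_borel_measurable[OF f]
  have g_even: "g (- u) = g u" for u
    using g[of u "- u"] g[of "- u" u] by simp
  define k where "k = (m + m') / 2"
  have fold: "(\<integral>\<^sup>+x. g (x - n) * f x \<partial>lborel) =
      (\<integral>\<^sup>+x. indicator {k..} x * (g (x - n) * f x)
        + indicator {k<..} x * (g (x - (2 * k - n)) * f (2 * k - x)) \<partial>lborel)" for n
  proof -
    have "g (2 * k - x - n) = g (x - (2 * k - n))" for x
      using g_even[of "x - (2 * k - n)"] by (simp add: algebra_simps)
    then show ?thesis
      using nn_integral_lborel_fold[of "\<lambda>x. g (x - n) * f x" k] by simp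
  qed
  have k: "2 * k = m + m'"
    by (simp add: k_def)
  then have reflected_centres: "2 * k - m = m'" "2 * k - m' = m"
    by simp_all
  show ?thesis
    unfolding fold[of m] fold[of m'] reflected_centres
  proof (intro nn_integral_mono)
    fix x
    have g_le: "g (x - m) \<le> g (x - m')" if "k \<le> x"
      using that m k by (intro g) arith
    consider "x < k" | "x = k" | "k < x"
      by linarith
    then show "indicator {k..} x * (g (x - m) * f x) + indicator {k<..} x * (g (x - m') * f (2 * k - x))
      \<le> indicator {k..} x * (g (x - m') * f x) + indicator {k<..} x * (g (x - m) * f (2 * k - x))"
    proof cases
      case 2
      then show ?thesis
        using g_le by (simp add: mult_right_mono)
    next
      case 3
      have "f (2 * k - x) \<le> f x"
        using 3 m k by (intro radially_monoD[OF f]) arith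
      with g_le 3 have "g (x - m) * f x + g (x - m') * f (2 * k - x)
          \<le> g (x - m') * f x + g (x - m) * f (2 * k - x)"
        by (intro rearrangement_two) simp_all
      then show ?thesis
        using 3 by simp
    qed simp
  qed
qed

lemma radially_mono_nn_integral_translate:
  fixes f g :: "real \<Rightarrow> ennreal"
  assumes f: "radially_mono f" and g_meas [measurable]: "g \<in> borel_measurable borel"
    and g: "\<And>u v. \<bar>u\<bar> \<le> \<bar>v\<bar> \<Longrightarrow> g v \<le> g u"
  shows "radially_mono (\<lambda>m. \<integral>\<^sup>+x. g (x - m) * f x \<partial>lborel)"
proof -
  note [measurable] = radially_mono_borel_measurable[OF f]
  have g_even: "g (- u) = g u" for u
    using g[of u "- u"] g[of "- u" u] by simp
  have integral_minus: "(\<integral>\<^sup>+x. g (x + m) * f x \<partial>lborel) = (\<integral>\<^sup>+x. g (x - m) * f x \<partial>lborel)"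
    for m
  proof -
    have "g (x + m) = g (0 - x - m)" for x
      using g_even[of "x + m"] by simp
    then have "(\<integral>\<^sup>+x. g (x + m) * f x \<partial>lborel) = (\<integral>\<^sup>+x. g (0 - x - m) * f (0 - x) \<partial>lborel)"
      using radially_mono_minus[OF f] by simp
    also have "\<dots> = (\<integral>\<^sup>+x. g (x - m) * f x \<partial>lborel)"
      by (rule nn_integral_lborel_reflect) measurable
    finally show ?thesis .
  qed
  have integral_abs: "(\<integral>\<^sup>+x. g (x - \<bar>m\<bar>) * f x \<partial>lborel) = (\<integral>\<^sup>+x. g (x - m) * f x \<partial>lborel)"
    for m
    by (cases "0 \<le> m") (simp_all add: integral_minus)
  show ?thesis
  proof (rule radially_monoI)
    fix m m' :: real
    assume "\<bar>m\<bar> \<le> \<bar>m'\<bar>"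
    then have "(\<integral>\<^sup>+x. g (x - \<bar>m\<bar>) * f x \<partial>lborel) \<le> (\<integral>\<^sup>+x. g (x - \<bar>m'\<bar>) * f x \<partial>lborel)"
      by (intro nn_integral_translate_mono[OF f g_meas g]) simp_all
    then show "(\<integral>\<^sup>+x. g (x - m) * f x \<partial>lborel) \<le> (\<integral>\<^sup>+x. g (x - m') * f x \<partial>lborel)"
      by (simp only: integral_abs)
  qed
qed

lemma radially_mono_cont:
  assumes "\<And>c'. radially_mono (\<lambda>x. V x c')"
  shows "radially_mono (\<lambda>D. cont a \<sigma> p01 p10 V D c)"
  unfolding cont_def
proof (intro radially_mono_sum radially_mono_mult radially_mono_const)
  fix c'
  have "radially_mono (\<lambda>m. \<integral>\<^sup>+x. ennreal (psi \<sigma> (x - m)) * V x c' \<partial>lborel)"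
    using assms by (rule radially_mono_nn_integral_translate) (auto intro: ennreal_leI psi_antimono)
  then show "radially_mono (\<lambda>D. \<integral>\<^sup>+x. ennreal (psi \<sigma> (x - a * D)) * V x c' \<partial>lborel)"
    by (rule radially_mono_scale)
qed

lemma radially_mono_Vit:
  assumes "0 \<le> \<gamma>"
  shows "radially_mono (\<lambda>D. Vit a \<sigma> \<gamma> lam p01 p10 t D c)"
proof (induction t arbitrary: c)
  case 0
  show ?case
    by (simp add: radially_mono_const)
next
  case (Suc t)
  let ?V = "Vit a \<sigma> \<gamma> lam p01 p10 t"
  have cont: "radially_mono (\<lambda>D. cont a \<sigma> p01 p10 ?V D c)"
    using Suc.IH by (rule radially_mono_cont)
  have "radially_mono (\<lambda>D. Q0 a \<sigma> \<gamma> p01 p10 ?V D c)"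
    unfolding Q0_def
    using radially_mono_mult[OF radially_mono_exp_square[OF assms, of 0] cont] by simp
  moreover have "radially_mono (\<lambda>D. Q1 a \<sigma> \<gamma> lam p01 p10 ?V D c)"
  proof (cases "c = 0")
    case True
    then show ?thesis
      unfolding Q1_def
      using radially_mono_mult[OF radially_mono_exp_square[OF assms, of lam] cont]
      by (simp add: radially_mono_const)
  next
    case False
    \<comment> \<open>also for \<open>c > 1\<close>, where \<open>ennreal\<close> clips the negative factor to \<open>0\<close>\<close>
    then have "ennreal ((1 - real c) * exp (\<gamma> * (lam + D\<^sup>2))) = 0" for D
      by (simp add: ennreal_eq_0_iff mult_nonpos_nonneg)
    then show ?thesis
      unfolding Q1_def by (simp add: radially_mono_const)
  qed
  ultimately show ?case
    by (simp add: radially_mono_min)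
qed

theorem lemma3:
  fixes a \<sigma> \<gamma> lam p01 p10 :: real and T :: nat
  assumes "\<sigma> > 0" and "\<gamma> > 0" and "lam > 0" and "T \<ge> 1"
    and "0 \<le> p01" and "p01 \<le> 1" and "0 \<le> p10" and "p10 \<le> 1"
  shows "\<forall>t \<le> T. \<forall>c \<in> {0::nat, 1}.
           (\<forall>D D'. \<bar>D\<bar> = \<bar>D'\<bar> \<longrightarrow> Vit a \<sigma> \<gamma> lam p01 p10 t D c = Vit a \<sigma> \<gamma> lam p01 p10 t D' c)
         \<and> (\<forall>D D'. \<bar>D\<bar> \<le> \<bar>D'\<bar> \<longrightarrow> Vit a \<sigma> \<gamma> lam p01 p10 t D c \<le> Vit a \<sigma> \<gamma> lam p01 p10 t D' c)"
proof (intro allI impI ballI conjI)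
  fix t c D D'
  have mono: "radially_mono (\<lambda>D. Vit a \<sigma> \<gamma> lam p01 p10 t D c)"
    using \<open>\<gamma> > 0\<close> by (simp add: radially_mono_Vit)
  show "Vit a \<sigma> \<gamma> lam p01 p10 t D c = Vit a \<sigma> \<gamma> lam p01 p10 t D' c" if "\<bar>D\<bar> = \<bar>D'\<bar>"
    using mono that by (rule radially_mono_abs_eq)
  show "Vit a \<sigma> \<gamma> lam p01 p10 t D c \<le> Vit a \<sigma> \<gamma> lam p01 p10 t D' c" if "\<bar>D\<bar> \<le> \<bar>D'\<bar>"
    using mono that by (rule radially_monoD)
qed

end
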